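(* Let $\lambda_{\max}>1$ and let $F:[0,\lambda_{\max}]\to\mathbb{R}_+$ be continuously differentiable with $F(0)=0$, such that (i) $F(x)<F^\star$ for all $x\in[0,1)$ and $F'(1)>0$; (ii) $F''$ exists and is continuous on $(0,\lambda_{\max})$ with $F''(1)<0$; (iii) $F^{(3)}$ and $F^{(4)}$ exist and are bounded on $[0,\lambda_{\max}]$; and (iv) $F$ is concave-like. Then there exist constants $C_1,C_2,\varepsilon_0>0$ (depending on $F$) such that for all $\varepsilon\in(0,\varepsilon_0]$, $$\frac{C_1}{\sqrt{\varepsilon}}\le q^\star(\varepsilon)\le\frac{C_2}{\sqrt{\varepsilon}}.$$
   Context: A control policy is a function $\lambda:\mathbb{Z}_+\to[0,\lambda_{\max}]$; it defines a continuous-time birth–death chain on $\mathbb{Z}_+$ with rate $\lambda(q)$ from $q$ to $q+1$ and rate $1$ from $q$ to $q-1$ ($q\ge1$). Let $\mathcal S$ be the set of states reachable from $0$. The policy is stable if $\sum_{i\in\mathcal S}\prod_{q=0}^{i}\lambda(q)<\infty$ (positive recurrence on $\mathcal S$); then $\pi$ is its stationary distribution and $\bar q\sim\pi$. $F^\star=\sup\{\mathbb{E}_\alpha[F(X)]:\alpha$ a probability measure on $[0,\lambda_{\max}]$, $X\sim\alpha$, $\mathbb{E}_\alpha[X]\le1\}$; regret $R(\lambda)=F^\star-\mathbb{E}_\pi[F(\lambda(\bar q))]$; $q^\star(\varepsilon)=\inf\{\mathbb{E}_\pi[\bar q]:\lambda$ stable, $R(\lambda)\le\varepsilon\}$. $F$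 is concave-like if for all $x_1,x_2\in[0,\lambda_{\max}]\setminus\{1\}$, $p\in(0,1)$ with $px_1+(1-p)x_2=1$, we have $F(1)>pF(x_1)+(1-p)F(x_2)$. *)

theory Defs
  imports "HOL-Probability.Probability"
begin

definition policy :: "real \<Rightarrow> (nat \<Rightarrow> real) \<Rightarrow> bool" where
  "policy lmax lam \<longleftrightarrow> (\<forall>q. 0 \<le> lam q \<and> lam q \<le> lmax)"

text \<open>States reachable from 0 in the birth-death chain (up-rate lam q, down-rate 1).\<close>
definition reach :: "(nat \<Rightarrow> real) \<Rightarrow> nat set" where
  "reach lam = {i. \<forall>q<i. lam q > 0}"

definition stable :: "(nat \<Rightarrow> real) \<Rightarrow> bool" where
  "stable lam \<longleftrightarrow> (\<lambda>i. \<Prod>q\<le>i. lam q) summable_on reach lam"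

text \<open>Stationary distribution of the chain on the reachable set (global balance equations).\<close>
definition stationary :: "(nat \<Rightarrow> real) \<Rightarrow> (nat \<Rightarrow> real) \<Rightarrow> bool" where
  "stationary lam p \<longleftrightarrow>
     (\<forall>i. 0 \<le> p i) \<and> (\<forall>i. i \<notin> reach lam \<longrightarrow> p i = 0) \<and> p sums 1 \<and>
     (\<forall>j\<in>reach lam. p j * (lam j + (if j = 0 then 0 else 1)) =
        (if j = 0 then 0 else p (j - 1) * lam (j - 1)) + p (Suc j))"

definition stat_dist :: "(nat \<Rightarrow> real) \<Rightarrow> nat \<Rightarrow> real" where
  "stat_dist lam = (THE p. stationary lam p)"

definition exp_queue :: "(nat \<Rightarrow> real) \<Rightarrow> ennreal" where
  "exp_queue lam = (\<Sum>i. ennreal (real i * stat_dist lam i))"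

definition exp_reward :: "(real \<Rightarrow> real) \<Rightarrow> (nat \<Rightarrow> real) \<Rightarrow> real" where
  "exp_reward F lam = (\<Sum>i. stat_dist lam i * F (lam i))"

definition Fstar :: "(real \<Rightarrow> real) \<Rightarrow> real \<Rightarrow> real" where
  "Fstar F lmax = Sup {(\<integral>x. F x \<partial>M) | M.
      prob_space M \<and> sets M = sets (restrict_space borel {0..lmax}) \<and> (\<integral>x. x \<partial>M) \<le> 1}"

definition regret :: "(real \<Rightarrow> real) \<Rightarrow> real \<Rightarrow> (nat \<Rightarrow> real) \<Rightarrow> real" where
  "regret F lmax lam = Fstar F lmax - exp_reward F lam"

definition qstar :: "(real \<Rightarrow> real) \<Rightarrow> real \<Rightarrow> real \<Rightarrow> ennreal" where
  "qstar F lmax eps = (INF lam \<in> {lam. policy lmax lam \<and> stable lam \<and> regret F lmax lam \<le> eps}.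
      exp_queue lam)"

definition concave_like :: "(real \<Rightarrow> real) \<Rightarrow> real \<Rightarrow> bool" where
  "concave_like F lmax \<longleftrightarrow>
     (\<forall>x1\<in>{0..lmax} - {1}. \<forall>x2\<in>{0..lmax} - {1}. \<forall>p\<in>{0<..<1}.
        p * x1 + (1 - p) * x2 = 1 \<longrightarrow> F 1 > p * F x1 + (1 - p) * F x2)"

end

theory Submission
  imports Defs
begin

text \<open>
  For a policy \<open>lam\<close> with stationary law \<open>\<pi>\<close>, detailed balance \<open>\<pi>(q + 1) = \<pi>(q) lam(q)\<close> gives
  \<open>E[lam] = 1 - \<pi>(0)\<close>. Concave-likeness and the curvature of \<open>F\<close> at 1 give the supporting line
  \<open>F x \<le> F 1 + F'(1) (x - 1)\<close> on \<open>[0, lmax]\<close>, hence \<open>Fstar F lmax = F 1\<close>, and the regret equals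
  \<open>F'(1) \<pi>(0) + E[F 1 + F'(1) (lam - 1) - F lam]\<close>. The gap inside the expectation is at most
  quadratic in \<open>lam - 1\<close>, and at least quadratic on one side of 1.

  Lower bound: if the gap is quadratic to the right of 1, \<open>sqrt \<pi>\<close> can increase by at most
  \<open>sqrt \<pi>(q) (lam q - 1)\<close> per step, and by Cauchy-Schwarz a regret \<open>\<epsilon>\<close> bounds its total increase
  over \<open>N\<close> states by \<open>sqrt (N \<epsilon>)\<close>; since also \<open>\<pi>(0) \<le> \<epsilon> / F'(1)\<close>, the mass of \<open>{..<N}\<close> stays small.
  If it is quadratic to the left, \<open>sqrt \<pi>\<close> decreases as slowly, so mass on \<open>{..<N}\<close> forces
  comparable mass on \<open>{N..<2 N}\<close>. Either way a fixed fraction of the mass lies beyond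
  \<open>N \<approx> \<epsilon>^(-1/2)\<close>.

  Upper bound: the policy whose stationary law is proportional to \<open>(m + min q (2 K - q))\<^sup>2\<close> on
  \<open>{0..2 K}\<close> has regret \<open>O(1 / K\<^sup>2)\<close> and mean queue length at most \<open>2 K\<close>; take \<open>K \<approx> \<epsilon>^(-1/2)\<close>.
\<close>

section \<open>Stationary distribution and mean queue length\<close>

lemma reach_SucD: "Suc j \<in> reach lam \<Longrightarrow> j \<in> reach lam"
  unfolding reach_def by auto

lemma stationary_Suc:
  assumes "stationary lam p"
  shows "p (Suc j) = p j * lam j"
proof (induction j)
  case 0
  have "0 \<in> reach lam" unfolding reach_def by auto
  then show ?case using assms unfolding stationary_def by force
next
  case (Suc j)
  show ?case
  proof (cases "Suc j \<in> reach lam")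
    case True
    then have "p (Suc j) * (lam (Suc j) + 1) = p j * lam j + p (Suc (Suc j))"
      using assms unfolding stationary_def by force
    then show ?thesis using Suc by (simp add: algebra_simps)
  next
    case False
    then have "Suc (Suc j) \<notin> reach lam" using reach_SucD by blast
    then show ?thesis using False assms unfolding stationary_def by auto
  qed
qed

lemma stationary_eq_prod:
  assumes "stationary lam p"
  shows "p q = p 0 * (\<Prod>j<q. lam j)"
  by (induction q) (auto simp: stationary_Suc[OF assms])

lemma stationary_unique:
  assumes "stationary lam p" and "stationary lam p'"
  shows "p = p'"
proof -
  have prod_sums: "(\<lambda>q. \<Prod>j<q. lam j) sums (1 / p 0)" if "stationary lam p" for p
  proof -
    have p_sums: "p sums 1" using that unfolding stationary_def by blast
    have "p 0 \<noteq> 0"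
    proof
      assume "p 0 = 0"
      then have "p = (\<lambda>_. 0)" using stationary_eq_prod[OF that] by (metis mult_zero_left)
      then show False using p_sums sums_zero sums_unique2 by fastforce
    qed
    then have "(\<lambda>q. p q / p 0) = (\<lambda>q. \<Prod>j<q. lam j)"
      using stationary_eq_prod[OF that] by (metis nonzero_mult_div_cancel_left)
    then show ?thesis using sums_divide[OF p_sums, of "p 0"] by simp
  qed
  have "p 0 = p' 0"
    using sums_unique2[OF prod_sums[OF assms(1)] prod_sums[OF assms(2)]] by simp
  show ?thesis
  proof
    fix q
    show "p q = p' q"
      using stationary_eq_prod[OF assms(1), of q] stationary_eq_prod[OF assms(2), of q]
        \<open>p 0 = p' 0\<close> by simp
  qed
qed

lemma prod_eq_0_if_not_reach:
  assumes "\<And>j. 0 \<le> lam j" and "q \<notin> reach lam"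
  shows "(\<Prod>j<q. lam j) = 0"
proof -
  obtain j where "j < q" "\<not> lam j > 0" using assms(2) unfolding reach_def by blast
  then have "lam j = 0" using assms(1)[of j] by simp
  then show ?thesis using \<open>j < q\<close> by (auto intro: prod_zero)
qed

lemma summable_prod_if_stable:
  assumes lam_nonneg: "\<And>j. 0 \<le> lam j" and "stable lam"
  shows "summable (\<lambda>q. \<Prod>j<q. lam j)"
proof -
  let ?g = "\<lambda>i. \<Prod>j<Suc i. lam j"
  have "?g summable_on reach lam"
    using assms(2) unfolding stable_def by (simp add: lessThan_Suc_atMost)
  moreover have "?g summable_on UNIV \<longleftrightarrow> ?g summable_on reach lam"
  proof (rule summable_on_cong_neutral)
    fix i assume "i \<in> UNIV - reach lam"
    then have "Suc i \<notin> reach lam" using reach_SucD by blast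
    then show "?g i = 0" by (rule prod_eq_0_if_not_reach[OF lam_nonneg])
  qed auto
  ultimately have "?g summable_on UNIV" by blast
  then have "summable ?g"
    by (rule summable_on_UNIV_nonneg_real_iff[THEN iffD1, rotated]) (simp add: lam_nonneg prod_nonneg)
  then show ?thesis by (rule summable_Suc_iff[THEN iffD1])
qed

lemma stationary_normalized_prod:
  assumes lam_nonneg: "\<And>j. 0 \<le> lam j" and "stable lam"
  shows "stationary lam (\<lambda>q. (\<Prod>j<q. lam j) / (\<Sum>i. \<Prod>j<i. lam j))"
proof -
  define g where "g q = (\<Prod>j<q. lam j)" for q
  define S where "S = suminf g"
  have g_nonneg: "0 \<le> g q" for q unfolding g_def using lam_nonneg by (simp add: prod_nonneg)
  have g_summable: "summable g"
    unfolding g_def by (rule summable_prod_if_stable[OF assms])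
  have "g 0 \<le> S" unfolding S_def using sum_le_suminf[OF g_summable, of "{0}"] g_nonneg by simp
  then have S_ge_1: "1 \<le> S" by (simp add: g_def)
  have g_Suc: "g (Suc k) = g k * lam k" for k unfolding g_def by simp
  show ?thesis
    unfolding stationary_def g_def[symmetric] S_def[symmetric]
  proof (intro conjI allI impI ballI)
    show "0 \<le> g i / S" for i using g_nonneg S_ge_1 by simp
    show "g i / S = 0" if "i \<notin> reach lam" for i
      using prod_eq_0_if_not_reach[OF lam_nonneg that] by (simp add: g_def)
    show "(\<lambda>q. g q / S) sums 1"
      using sums_divide[OF summable_sums[OF g_summable], of S] S_ge_1 by (simp add: S_def)
    show "g j / S * (lam j + (if j = 0 then 0 else 1)) =
        (if j = 0 then 0 else g (j - 1) / S * lam (j - 1)) + g (Suc j) / S" for j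
      by (cases j) (simp_all add: g_Suc add_divide_distrib algebra_simps)
  qed
qed

context
  fixes lam :: "nat \<Rightarrow> real"
  assumes lam_nonneg: "\<And>j. 0 \<le> lam j" and stable: "stable lam"
begin

lemma stationary_stat_dist: "stationary lam (stat_dist lam)"
proof -
  note ex = stationary_normalized_prod[OF lam_nonneg stable]
  have "stat_dist lam = (\<lambda>q. (\<Prod>j<q. lam j) / (\<Sum>i. \<Prod>j<i. lam j))"
    unfolding stat_dist_def using ex stationary_unique[OF _ ex] by (rule the_equality)
  then show ?thesis using ex by simp
qed

lemma stat_dist_nonneg: "0 \<le> stat_dist lam i"
  using stationary_stat_dist unfolding stationary_def by blast

lemma stat_dist_sums: "stat_dist lam sums 1"
  using stationary_stat_dist unfolding stationary_def by blast

lemma stat_dist_eq_0: "i \<notin> reach lam \<Longrightarrow> stat_dist lam i = 0"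
  using stationary_stat_dist unfolding stationary_def by blast

lemma stat_dist_Suc: "stat_dist lam (Suc j) = stat_dist lam j * lam j"
  by (rule stationary_Suc[OF stationary_stat_dist])

lemma sum_stat_dist_le_1: "finite A \<Longrightarrow> (\<Sum>q\<in>A. stat_dist lam q) \<le> 1"
  using sum_le_suminf[OF sums_summable[OF stat_dist_sums], of A] stat_dist_nonneg
    sums_unique[OF stat_dist_sums] by simp

lemma stat_dist_mean_rate: "(\<lambda>i. stat_dist lam i * lam i) sums (1 - stat_dist lam 0)"
  using stat_dist_sums sums_Suc_iff[of "stat_dist lam" "1 - stat_dist lam 0"]
  by (simp add: stat_dist_Suc)

lemma exp_queue_ge:
  "ennreal (real N * (1 - (\<Sum>q<N. stat_dist lam q))) \<le> exp_queue lam"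
proof -
  define p where "p = stat_dist lam"
  define g where "g i = (if N \<le> i then real N * p i else 0)" for i
  have p_summable: "summable p" unfolding p_def by (rule sums_summable[OF stat_dist_sums])
  have g_nonneg: "0 \<le> g i" for i by (simp add: g_def p_def stat_dist_nonneg)
  have g_summable: "summable g"
    by (rule summable_comparison_test'[where g="\<lambda>i. real N * p i"])
      (use p_summable g_nonneg in \<open>auto simp: g_def intro: summable_mult\<close>)
  have "suminf g = (\<Sum>n. g (n + N))"
    using suminf_split_initial_segment[OF g_summable, of N] by (simp add: g_def)
  also have "\<dots> = real N * (\<Sum>n. p (n + N))"
    using summable_ignore_initial_segment[OF p_summable, of N] by (simp add: g_def suminf_mult)
  also have "(\<Sum>n. p (n + N)) = 1 - (\<Sum>q<N. p q)"
    using suminf_split_initial_segment[OF p_summable, of N] sums_unique[OF stat_dist_sums]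
    by (simp add: p_def)
  finally have "ennreal (real N * (1 - (\<Sum>q<N. p q))) = (\<Sum>i. ennreal (g i))"
    using suminf_ennreal2[OF g_nonneg g_summable] by simp
  also have "\<dots> \<le> (\<Sum>i. ennreal (real i * p i))"
    by (intro suminf_le ennreal_leI) (auto simp: g_def p_def stat_dist_nonneg mult_right_mono)
  finally show ?thesis unfolding exp_queue_def p_def .
qed

lemma exp_queue_le_if_reach_subset:
  assumes "reach lam \<subseteq> {..N}"
  shows "exp_queue lam \<le> ennreal (real N)"
proof -
  have "exp_queue lam \<le> (\<Sum>i. ennreal (real N * stat_dist lam i))"
    unfolding exp_queue_def
  proof (intro suminf_le ennreal_leI)
    show "real i * stat_dist lam i \<le> real N * stat_dist lam i" for i
    proof (cases "i \<in> reach lam")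
      case True
      then have "i \<le> N" using assms by auto
      then show ?thesis using stat_dist_nonneg[of i] by (simp add: mult_right_mono)
    qed (simp add: stat_dist_eq_0)
  qed auto
  also have "\<dots> = ennreal (\<Sum>i. real N * stat_dist lam i)"
    using stat_dist_nonneg sums_summable[OF stat_dist_sums]
    by (intro suminf_ennreal2) (auto intro: summable_mult)
  also have "(\<Sum>i. real N * stat_dist lam i) = real N"
    using sums_unique[OF sums_mult[OF stat_dist_sums, of "real N"]] by simp
  finally show ?thesis .
qed

end

section \<open>Regret relative to the supporting line at 1\<close>

lemma policy_in_range: "policy lmax lam \<Longrightarrow> lam j \<in> {0..lmax}"
  and policy_nonneg: "policy lmax lam \<Longrightarrow> 0 \<le> lam j"
  unfolding policy_def by auto

lemma regret_sums:
  assumes pol: "policy lmax lam" and st: "stable lam"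
    and FS: "Fstar F lmax = F 1" and F_bdd: "bounded (F ` {0..lmax})"
  shows "(\<lambda>i. stat_dist lam i * (F 1 + a * (lam i - 1) - F (lam i)))
           sums (regret F lmax lam - a * stat_dist lam 0)"
proof -
  note lam_nonneg = policy_nonneg[OF pol]
  define p where "p = stat_dist lam"
  obtain B where B: "\<forall>x\<in>{0..lmax}. \<bar>F x\<bar> \<le> B"
    using F_bdd by (auto simp: bounded_iff)
  have lam_in: "lam i \<in> {0..lmax}" for i by (rule policy_in_range[OF pol])
  have p_sums: "p sums 1" unfolding p_def by (rule stat_dist_sums[OF lam_nonneg st])
  have "summable (\<lambda>i. p i * F (lam i))"
  proof (rule summable_comparison_test'[where g="\<lambda>i. p i * B"])
    show "summable (\<lambda>i. p i * B)" by (rule summable_mult2[OF sums_summable[OF p_sums]])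
    show "norm (p n * F (lam n)) \<le> p n * B" for n
      using B lam_in[of n] stat_dist_nonneg[OF lam_nonneg st]
      by (simp add: p_def abs_mult mult_left_mono)
  qed
  then have "(\<lambda>i. p i * F (lam i)) sums exp_reward F lam"
    unfolding exp_reward_def p_def by (rule summable_sums)
  then have "(\<lambda>i. p i * F 1 + a * (p i * lam i - p i) - p i * F (lam i))
       sums (1 * F 1 + a * ((1 - p 0) - 1) - exp_reward F lam)"
    using p_sums stat_dist_mean_rate[OF lam_nonneg st]
    by (intro sums_diff sums_add sums_mult sums_mult2) (simp_all add: p_def)
  then show ?thesis
    unfolding regret_def FS p_def by (simp add: algebra_simps)
qed

lemma regret_ge:
  assumes pol: "policy lmax lam" and st: "stable lam"
    and FS: "Fstar F lmax = F 1" and F_bdd: "bounded (F ` {0..lmax})"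
    and gap: "\<forall>x\<in>{0..lmax}. F x \<le> F 1 + s * (x - 1) - c * \<phi> x"
    and \<phi>_nonneg: "\<forall>x\<in>{0..lmax}. 0 \<le> \<phi> x" and c: "0 \<le> c"
  shows "s * stat_dist lam 0 + c * (\<Sum>j<n. stat_dist lam j * \<phi> (lam j)) \<le> regret F lmax lam"
proof -
  define t where "t i = stat_dist lam i * (F 1 + s * (lam i - 1) - F (lam i))" for i
  have t_sums: "t sums (regret F lmax lam - s * stat_dist lam 0)"
    unfolding t_def by (rule regret_sums[OF pol st FS F_bdd])
  have t_ge: "c * (stat_dist lam i * \<phi> (lam i)) \<le> t i" for i
  proof -
    have "lam i \<in> {0..lmax}" by (rule policy_in_range[OF pol])
    then have "c * \<phi> (lam i) \<le> F 1 + s * (lam i - 1) - F (lam i)" using gap by fastforce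
    then show ?thesis
      unfolding t_def using stat_dist_nonneg[OF policy_nonneg[OF pol] st, of i]
      by (metis mult.left_commute mult_left_mono)
  qed
  have t_nonneg: "0 \<le> t i" for i
    using t_ge[of i] c stat_dist_nonneg[OF policy_nonneg[OF pol] st, of i]
      \<phi>_nonneg policy_in_range[OF pol, of i]
    by (meson mult_nonneg_nonneg order_trans)
  have "c * (\<Sum>j<n. stat_dist lam j * \<phi> (lam j)) \<le> (\<Sum>j<n. t j)"
    unfolding sum_distrib_left by (intro sum_mono t_ge)
  also have "\<dots> \<le> suminf t"
    using sum_le_suminf[OF sums_summable[OF t_sums]] t_nonneg by blast
  finally show ?thesis using sums_unique[OF t_sums] by simp
qed

lemma regret_le:
  assumes pol: "policy lmax lam" and st: "stable lam"
    and FS: "Fstar F lmax = F 1" and F_bdd: "bounded (F ` {0..lmax})"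
    and gap: "\<forall>x\<in>{0..lmax}. F 1 + s * (x - 1) - K * \<phi> x \<le> F x"
    and \<phi>_summable: "summable (\<lambda>i. stat_dist lam i * \<phi> (lam i))"
  shows "regret F lmax lam \<le> s * stat_dist lam 0 + K * (\<Sum>i. stat_dist lam i * \<phi> (lam i))"
proof -
  have "regret F lmax lam - s * stat_dist lam 0 \<le> K * (\<Sum>i. stat_dist lam i * \<phi> (lam i))"
  proof (rule sums_le[OF _ regret_sums[OF pol st FS F_bdd] sums_mult[OF summable_sums[OF \<phi>_summable]]])
    fix i
    have "lam i \<in> {0..lmax}" by (rule policy_in_range[OF pol])
    then have "F 1 + s * (lam i - 1) - F (lam i) \<le> K * \<phi> (lam i)" using gap by fastforce
    then show "stat_dist lam i * (F 1 + s * (lam i - 1) - F (lam i))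
        \<le> K * (stat_dist lam i * \<phi> (lam i))"
      using stat_dist_nonneg[OF policy_nonneg[OF pol] st, of i]
      by (metis mult.left_commute mult_left_mono)
  qed
  then show ?thesis by simp
qed

lemma integral_le_if_supporting_line:
  fixes F :: "real \<Rightarrow> real" and M :: "real measure"
  assumes M: "prob_space M" "sets M = sets (restrict_space borel {0..lmax})" "(\<integral>x. x \<partial>M) \<le> 1"
    and F_cont: "continuous_on {0..lmax} F" and s: "0 \<le> s"
    and F_nonneg: "\<forall>x\<in>{0..lmax}. 0 \<le> F x"
    and line: "\<forall>x\<in>{0..lmax}. F x \<le> F 1 + s * (x - 1)"
  shows "(\<integral>x. F x \<partial>M) \<le> F 1"
proof -
  interpret prob_space M by (rule M(1))
  have space_M: "space M = {0..lmax}"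
    using sets_eq_imp_space_eq[OF M(2)] by (simp add: space_restrict_space)
  have F_M: "F \<in> borel_measurable M" and id_M: "(\<lambda>x. x) \<in> borel_measurable M"
    using borel_measurable_continuous_on_restrict[OF F_cont]
      borel_measurable_continuous_on_restrict[OF continuous_on_id]
      measurable_cong_sets[OF M(2), of borel borel] by auto
  have "integrable M F"
  proof (rule integrable_const_bound[where B="F 1 + s * lmax", OF AE_I2 F_M])
    fix x assume "x \<in> space M"
    then have x: "x \<in> {0..lmax}" using space_M by simp
    have "s * (x - 1) \<le> s * lmax" using x s by (intro mult_left_mono) auto
    then have "F x \<le> F 1 + s * lmax" using line x by fastforce
    then show "norm (F x) \<le> F 1 + s * lmax" using F_nonneg x by simp
  qed
  moreover have id_int: "integrable M (\<lambda>x. x)"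
    by (rule integrable_const_bound[where B=lmax, OF AE_I2 id_M]) (use space_M in auto)
  ultimately have "(\<integral>x. F x \<partial>M) \<le> (\<integral>x. (F 1 - s) + s * x \<partial>M)"
    using line space_M by (intro integral_mono) (auto simp: algebra_simps)
  also have "\<dots> = F 1 + s * ((\<integral>x. x \<partial>M) - 1)"
    using id_int by (simp add: prob_space algebra_simps)
  also have "\<dots> \<le> F 1" using M(3) s by (simp add: mult_nonneg_nonpos)
  finally show ?thesis .
qed

lemma Fstar_eq_if_supporting_line:
  fixes F :: "real \<Rightarrow> real"
  assumes lmax: "1 \<le> lmax" and F_cont: "continuous_on {0..lmax} F" and s: "0 \<le> s"
    and F_nonneg: "\<forall>x\<in>{0..lmax}. 0 \<le> F x"
    and line: "\<forall>x\<in>{0..lmax}. F x \<le> F 1 + s * (x - 1)"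
  shows "Fstar F lmax = F 1"
proof -
  let ?R = "restrict_space borel {0..lmax} :: real measure"
  have one: "(1::real) \<in> space ?R" using lmax by (simp add: space_restrict_space)
  have "prob_space (return ?R 1) \<and> sets (return ?R 1) = sets ?R \<and> (\<integral>x. x \<partial>return ?R 1) \<le> 1"
    using prob_space_return[OF one]
      integral_return[OF one borel_measurable_continuous_on_restrict[OF continuous_on_id]]
    by simp
  moreover have "(\<integral>x. F x \<partial>return ?R 1) = F 1"
    by (rule integral_return[OF one borel_measurable_continuous_on_restrict[OF F_cont]])
  ultimately have "F 1 \<in> {(\<integral>x. F x \<partial>M) | M.
      prob_space M \<and> sets M = sets ?R \<and> (\<integral>x. x \<partial>M) \<le> 1}"
    by (metis (mono_tags, lifting) mem_Collect_eq)
  then show ?thesis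
    unfolding Fstar_def using integral_le_if_supporting_line[OF _ _ _ F_cont s F_nonneg line]
    by (intro cSup_eq_maximum) auto
qed

section \<open>Quadratic bounds on the gap below the supporting line\<close>

lemma second_order_taylor_bounds:
  fixes f f' f'' :: "real \<Rightarrow> real"
  assumes f: "\<And>t. \<bar>t - c\<bar> < r \<Longrightarrow> (f has_real_derivative f' t) (at t)"
    and f': "\<And>t. \<bar>t - c\<bar> < r \<Longrightarrow> (f' has_real_derivative f'' t) (at t)"
    and f''_bounds: "\<And>t. \<bar>t - c\<bar> < r \<Longrightarrow> lo \<le> f'' t \<and> f'' t \<le> hi"
    and x: "\<bar>x - c\<bar> < r"
  shows "f c + f' c * (x - c) + lo / 2 * (x - c)^2 \<le> f x \<and>
         f x \<le> f c + f' c * (x - c) + hi / 2 * (x - c)^2"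
proof (cases "x = c")
  case False
  define diff where "diff m = (if m = 0 then f else if m = 1 then f' else f'')" for m :: nat
  have "\<forall>m t. m < 2 \<and> min x c \<le> t \<and> t \<le> max x c \<longrightarrow> DERIV (diff m) t :> diff (Suc m) t"
    using x f f' by (auto simp: diff_def less_2_cases_iff)
  then obtain t where t: "if x < c then x < t \<and> t < c else c < t \<and> t < x"
    and taylor: "f x = (\<Sum>m<2. diff m c / fact m * (x - c) ^ m) + diff 2 t / fact 2 * (x - c) ^ 2"
    using Taylor[of 2 diff f "min x c" "max x c" c x] False by (auto simp: diff_def)
  have "\<bar>t - c\<bar> < r" using t x by (auto split: if_splits)
  then have "lo / 2 * (x - c)^2 \<le> f'' t / 2 * (x - c)^2 \<and> f'' t / 2 * (x - c)^2 \<le> hi / 2 * (x - c)^2"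
    using f''_bounds by (auto intro: mult_right_mono divide_right_mono)
  moreover have "f x = f c + f' c * (x - c) + f'' t / 2 * (x - c)^2"
    using taylor by (simp add: diff_def numeral_2_eq_2)
  ultimately show ?thesis by linarith
qed simp

lemma second_order_taylor_bounds_near:
  fixes f f' f'' :: "real \<Rightarrow> real"
  assumes f: "\<forall>t\<in>{a<..<b}. (f has_real_derivative f' t) (at t)"
    and f': "\<forall>t\<in>{a<..<b}. (f' has_real_derivative f'' t) (at t)"
    and c: "c \<in> {a<..<b}" and f''_cont: "isCont f'' c" and \<delta>: "0 < \<delta>"
  shows "\<exists>r>0. a < c - r \<and> c + r < b \<and> (\<forall>x. \<bar>x - c\<bar> \<le> r \<longrightarrow>
     f c + f' c * (x - c) + (f'' c - \<delta>) / 2 * (x - c)^2 \<le> f x \<and>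
     f x \<le> f c + f' c * (x - c) + (f'' c + \<delta>) / 2 * (x - c)^2)"
proof -
  obtain d where d: "0 < d" and near: "\<And>t. \<bar>t - c\<bar> < d \<Longrightarrow> \<bar>f'' t - f'' c\<bar> < \<delta>"
    using f''_cont \<delta> unfolding continuous_at_eps_delta dist_real_def by blast
  define R where "R = min d (min (c - a) (b - c))"
  have R: "0 < R" using d c by (simp add: R_def)
  have inside: "t \<in> {a<..<b}" if "\<bar>t - c\<bar> < R" for t
    using that by (auto simp: R_def abs_less_iff)
  have "f c + f' c * (x - c) + (f'' c - \<delta>) / 2 * (x - c)^2 \<le> f x \<and>
        f x \<le> f c + f' c * (x - c) + (f'' c + \<delta>) / 2 * (x - c)^2" if "\<bar>x - c\<bar> < R" for x
  proof (rule second_order_taylor_bounds[of c R f f' f''])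
    fix t assume t: "\<bar>t - c\<bar> < R"
    show "(f has_real_derivative f' t) (at t)" "(f' has_real_derivative f'' t) (at t)"
      using f f' inside[OF t] by blast+
    have "\<bar>f'' t - f'' c\<bar> < \<delta>" using near t by (simp add: R_def)
    then show "f'' c - \<delta> \<le> f'' t \<and> f'' t \<le> f'' c + \<delta>" by linarith
  qed (rule that)
  moreover have "R \<le> c - a" "R \<le> b - c" by (simp_all add: R_def)
  then have "a < c - R / 2" "c + R / 2 < b" using R by linarith+
  ultimately show ?thesis using R by (intro exI[of _ "R / 2"]) auto
qed

text \<open>The two-point measure on \<open>x1 < 1 < x2\<close> with mean 1 puts mass \<open>(x2 - 1) / (x2 - x1)\<close>
  on \<open>x1\<close>.\<close>
lemma concave_like_chord:
  fixes F :: "real \<Rightarrow> real"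
  assumes cl: "concave_like F lmax" and x: "0 \<le> x1" "x1 < 1" "1 < x2" "x2 \<le> lmax"
  shows "(F x2 - F 1) * (1 - x1) < (F 1 - F x1) * (x2 - 1)"
proof -
  define p where "p = (x2 - 1) / (x2 - x1)"
  have p: "p \<in> {0<..<1}" "1 - p = (1 - x1) / (x2 - x1)"
    using x by (auto simp: p_def field_simps)
  have "p * x1 + (1 - p) * x2 = ((x2 - 1) * x1 + (1 - x1) * x2) / (x2 - x1)"
    unfolding p(2) by (simp add: p_def add_divide_distrib)
  also have "\<dots> = 1" using x by (simp add: algebra_simps)
  finally have mean: "p * x1 + (1 - p) * x2 = 1" .
  have "p * F x1 + (1 - p) * F x2 < F 1"
    using cl p(1) x mean unfolding concave_like_def by auto
  then have "((x2 - 1) * F x1 + (1 - x1) * F x2) / (x2 - x1) < F 1"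
    unfolding p(2) by (simp add: p_def add_divide_distrib)
  then have "(x2 - 1) * F x1 + (1 - x1) * F x2 < F 1 * (x2 - x1)"
    using x by (simp add: divide_less_eq)
  then show ?thesis by (simp add: algebra_simps)
qed

lemma le_if_less_add_small:
  fixes a b C r :: real
  assumes "0 < r" "0 \<le> C" "\<And>d. 0 < d \<Longrightarrow> d \<le> r \<Longrightarrow> a < b + C * d"
  shows "a \<le> b"
proof (rule ccontr)
  assume "\<not> a \<le> b"
  define d where "d = min r ((a - b) / (C + 1))"
  have "0 < d" "d \<le> r" using assms \<open>\<not> a \<le> b\<close> by (auto simp: d_def)
  have "C * d \<le> C * ((a - b) / (C + 1))" unfolding d_def by (intro mult_left_mono) (use assms in auto)
  also have "\<dots> \<le> a - b" using assms \<open>\<not> a \<le> b\<close> by (simp add: field_simps)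
  finally show False using assms(3)[OF \<open>0 < d\<close> \<open>d \<le> r\<close>] by simp
qed

text \<open>Letting the second point of a chord tend to 1 turns the chord inequality into the tangent
  inequality.\<close>
lemma concave_like_supporting_line:
  fixes F :: "real \<Rightarrow> real"
  assumes cl: "concave_like F lmax" and r: "0 < r" "r < 1" "1 + r < lmax"
    and K: "0 \<le> K" and a: "0 \<le> a"
    and lower: "\<forall>x. \<bar>x - 1\<bar> \<le> r \<longrightarrow> F 1 + s * (x - 1) - K * (x - 1)^2 \<le> F x"
    and upper: "\<forall>x. \<bar>x - 1\<bar> \<le> r \<longrightarrow> F x \<le> F 1 + s * (x - 1) - a * (x - 1)^2"
  shows "\<forall>x\<in>{0..lmax}. F x \<le> F 1 + s * (x - 1)"
proof
  fix x assume x: "x \<in> {0..lmax}"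
  consider "\<bar>x - 1\<bar> \<le> r" | "x < 1 - r" | "1 + r < x" by linarith
  then show "F x \<le> F 1 + s * (x - 1)"
  proof cases
    case 1
    then show ?thesis using upper mult_nonneg_nonneg[OF a zero_le_power2[of "x - 1"]] by fastforce
  next
    case 2
    show ?thesis
    proof (rule le_if_less_add_small[OF r(1), of "(1 - x) * K"])
      fix d assume d: "0 < d" "d \<le> r"
      have "(F (1 + d) - F 1) * (1 - x) < (F 1 - F x) * d"
        using concave_like_chord[OF cl, of x "1 + d"] x 2 d r by auto
      moreover have "(s * d - K * d^2) * (1 - x) \<le> (F (1 + d) - F 1) * (1 - x)"
        using lower[rule_format, of "1 + d"] d 2 r by (intro mult_right_mono) auto
      ultimately have "d * ((s - K * d) * (1 - x)) < d * (F 1 - F x)"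
        by (simp add: power2_eq_square algebra_simps)
      then have "(s - K * d) * (1 - x) < F 1 - F x" using d by simp
      then show "F x < F 1 + s * (x - 1) + (1 - x) * K * d" by (simp add: algebra_simps)
    qed (use 2 K r in simp)
  next
    case 3
    show ?thesis
    proof (rule le_if_less_add_small[OF r(1), of "(x - 1) * K"])
      fix d assume d: "0 < d" "d \<le> r"
      have "(F x - F 1) * d < (F 1 - F (1 - d)) * (x - 1)"
        using concave_like_chord[OF cl, of "1 - d" x] x 3 d r by auto
      moreover have "(F 1 - F (1 - d)) * (x - 1) \<le> (s * d + K * d^2) * (x - 1)"
        using lower[rule_format, of "1 - d"] d 3 r by (intro mult_right_mono) auto
      ultimately have "d * (F x - F 1) < d * ((s + K * d) * (x - 1))"
        by (simp add: power2_eq_square algebra_simps)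
      then have "F x - F 1 < (s + K * d) * (x - 1)" using d by simp
      then show "F x < F 1 + s * (x - 1) + (x - 1) * K * d" by (simp add: algebra_simps)
    qed (use 3 K r in simp)
  qed
qed

lemma quadratic_gap_from_local:
  fixes G :: "real \<Rightarrow> real"
  assumes a: "0 < a" and g: "0 < g" and L: "0 < L"
    and bounded: "\<forall>x\<in>S. \<bar>x - 1\<bar> \<le> L"
    and near: "\<forall>x\<in>S. \<bar>x - 1\<bar> \<le> r \<longrightarrow> a * (x - 1)^2 \<le> G x"
    and far: "\<forall>x\<in>S. r < \<bar>x - 1\<bar> \<longrightarrow> g \<le> G x"
  shows "\<exists>c>0. \<forall>x\<in>S. c * (x - 1)^2 \<le> G x"
proof (intro exI[of _ "min a (g / L^2)"] conjI ballI)
  show "0 < min a (g / L^2)" using a g L by simp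
  fix x assume x: "x \<in> S"
  show "min a (g / L^2) * (x - 1)^2 \<le> G x"
  proof (cases "\<bar>x - 1\<bar> \<le> r")
    case True
    have "min a (g / L^2) * (x - 1)^2 \<le> a * (x - 1)^2" by (intro mult_right_mono) auto
    then show ?thesis using near x True by fastforce
  next
    case False
    have "\<bar>x - 1\<bar> \<le> \<bar>L\<bar>" using bounded x L by auto
    then have "(x - 1)^2 \<le> L^2" by (simp only: abs_le_square_iff)
    then have "min a (g / L^2) * (x - 1)^2 \<le> g / L^2 * L^2"
      using g by (intro mult_mono) auto
    moreover have "g \<le> G x" using far x False by auto
    ultimately show ?thesis using L by simp
  qed
qed

lemma concave_like_below_line:
  fixes F :: "real \<Rightarrow> real"
  assumes cl: "concave_like F lmax" and x: "0 \<le> x1" "x1 < 1" "1 < x2" "x2 \<le> lmax"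
  shows "F x1 < F 1 + s * (x1 - 1) \<or> F x2 < F 1 + s * (x2 - 1)"
proof (rule ccontr)
  assume "\<not> ?thesis"
  then have "F 1 - F x1 \<le> s * (1 - x1)" and "s * (x2 - 1) \<le> F x2 - F 1"
    by (simp_all add: algebra_simps)
  then have "(F 1 - F x1) * (x2 - 1) \<le> s * (1 - x1) * (x2 - 1)"
    and "s * (x2 - 1) * (1 - x1) \<le> (F x2 - F 1) * (1 - x1)"
    using x by (auto intro!: mult_right_mono)
  then show False using concave_like_chord[OF cl x] by (simp add: algebra_simps)
qed

text \<open>By \<open>concave_like_below_line\<close> the gap attains a positive minimum on one of the two
  sides away from 1; combined with the quadratic gap near 1 this gives a quadratic gap on that side.\<close>
lemma concave_like_quadratic_gap:
  fixes F :: "real \<Rightarrow> real"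
  assumes cl: "concave_like F lmax" and r: "0 < r" "r < 1" "1 + r < lmax" and a: "0 < a"
    and F_cont: "continuous_on {0..lmax} F"
    and near: "\<forall>x. \<bar>x - 1\<bar> \<le> r \<longrightarrow> F x \<le> F 1 + s * (x - 1) - a * (x - 1)^2"
    and line: "\<forall>x\<in>{0..lmax}. F x \<le> F 1 + s * (x - 1)"
  shows "\<exists>c>0. (\<forall>x\<in>{0..1}. F x \<le> F 1 + s * (x - 1) - c * (x - 1)^2) \<or>
               (\<forall>x\<in>{1..lmax}. F x \<le> F 1 + s * (x - 1) - c * (x - 1)^2)"
proof -
  define G where "G x = F 1 + s * (x - 1) - F x" for x
  have G_cont: "continuous_on {0..lmax} G" unfolding G_def by (intro continuous_intros F_cont)
  have G_near: "a * (x - 1)^2 \<le> G x" if "\<bar>x - 1\<bar> \<le> r" for x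
    using near[rule_format, OF that] by (simp add: G_def)
  obtain x0 where x0: "x0 \<in> {0..1 - r}" "\<And>x. x \<in> {0..1 - r} \<Longrightarrow> G x0 \<le> G x"
    using continuous_attains_inf[of "{0..1 - r}" G] continuous_on_subset[OF G_cont] r by auto
  obtain y0 where y0: "y0 \<in> {1 + r..lmax}" "\<And>x. x \<in> {1 + r..lmax} \<Longrightarrow> G y0 \<le> G x"
    using continuous_attains_inf[of "{1 + r..lmax}" G] continuous_on_subset[OF G_cont] r by auto
  have "0 < G x0 \<or> 0 < G y0"
    using concave_like_below_line[OF cl, of x0 y0 s] x0 y0 r by (auto simp: G_def)
  then show ?thesis
  proof
    assume "0 < G x0"
    then obtain c where "c > 0" "\<forall>x\<in>{0..1}. c * (x - 1)^2 \<le> G x"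
      using quadratic_gap_from_local[of a "G x0" 1 "{0..1}" r G] a G_near x0 by force
    then have "\<forall>x\<in>{0..1}. F x \<le> F 1 + s * (x - 1) - c * (x - 1)^2" by (auto simp: G_def)
    then show ?thesis using \<open>c > 0\<close> by blast
  next
    assume "0 < G y0"
    then obtain c where "c > 0" "\<forall>x\<in>{1..lmax}. c * (x - 1)^2 \<le> G x"
      using quadratic_gap_from_local[of a "G y0" "lmax - 1" "{1..lmax}" r G] a G_near y0 r
      by force
    then have "\<forall>x\<in>{1..lmax}. F x \<le> F 1 + s * (x - 1) - c * (x - 1)^2" by (auto simp: G_def)
    then show ?thesis using \<open>c > 0\<close> by blast
  qed
qed

lemma quadratic_lower_bound_from_local:
  fixes F :: "real \<Rightarrow> real"
  assumes r: "0 < r" and K: "0 \<le> K" and s: "0 \<le> s"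
    and F_nonneg: "\<forall>x\<in>{0..lmax}. 0 \<le> F x"
    and near: "\<forall>x. \<bar>x - 1\<bar> \<le> r \<longrightarrow> F 1 + s * (x - 1) - K * (x - 1)^2 \<le> F x"
  shows "\<exists>K'\<ge>0. \<forall>x\<in>{0..lmax}. F 1 + s * (x - 1) - K' * (x - 1)^2 \<le> F x"
proof -
  define B where "B = \<bar>F 1\<bar> + s * \<bar>lmax\<bar>"
  have B: "0 \<le> B" using s by (simp add: B_def)
  define K' where "K' = max K (B / r^2)"
  have "F 1 + s * (x - 1) - K' * (x - 1)^2 \<le> F x" if x: "x \<in> {0..lmax}" for x
  proof (cases "\<bar>x - 1\<bar> \<le> r")
    case True
    have "K * (x - 1)^2 \<le> K' * (x - 1)^2" by (intro mult_right_mono) (auto simp: K'_def)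
    then show ?thesis using near True by force
  next
    case False
    then have "r^2 \<le> (x - 1)^2" using r by (simp add: abs_le_square_iff[symmetric])
    then have "B / r^2 * r^2 \<le> K' * (x - 1)^2"
      using B r K by (intro mult_mono) (auto simp: K'_def)
    then have "B \<le> K' * (x - 1)^2" using r by simp
    moreover have "s * (x - 1) \<le> s * \<bar>lmax\<bar>" using x s by (intro mult_left_mono) auto
    moreover have "0 \<le> F x" using F_nonneg x by blast
    ultimately show ?thesis using abs_ge_self[of "F 1"] by (simp add: B_def)
  qed
  then show ?thesis using K by (intro exI[of _ K']) (auto simp: K'_def)
qed

lemma quadratic_bounds_near_1:
  fixes F F' F'' :: "real \<Rightarrow> real"
  assumes lmax: "1 < lmax"
    and F_deriv: "\<forall>x\<in>{0..lmax}. (F has_real_derivative F' x) (at x within {0..lmax})"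
    and F'_deriv: "\<forall>x\<in>{0<..<lmax}. (F' has_real_derivative F'' x) (at x)"
    and F''_cont: "continuous_on {0<..<lmax} F''" and F''1: "F'' 1 < 0"
  shows "\<exists>r>0. r < 1 \<and> 1 + r < lmax \<and> (\<forall>x. \<bar>x - 1\<bar> \<le> r \<longrightarrow>
           F 1 + F' 1 * (x - 1) - (- 3 * F'' 1 / 4) * (x - 1)^2 \<le> F x \<and>
           F x \<le> F 1 + F' 1 * (x - 1) - (- F'' 1 / 4) * (x - 1)^2)"
proof -
  have F_at: "\<forall>x\<in>{0<..<lmax}. (F has_real_derivative F' x) (at x)"
  proof
    fix x :: real assume x: "x \<in> {0<..<lmax}"
    then have "(F has_real_derivative F' x) (at x within {0..lmax})" using F_deriv by auto
    then show "(F has_real_derivative F' x) (at x)" using at_within_Icc_at[of 0 x lmax] x by simp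
  qed
  have "isCont F'' 1" using F''_cont lmax by (simp add: continuous_on_eq_continuous_at)
  then have "\<exists>r>0. 0 < 1 - r \<and> 1 + r < lmax \<and> (\<forall>x. \<bar>x - 1\<bar> \<le> r \<longrightarrow>
      F 1 + F' 1 * (x - 1) + (F'' 1 - - F'' 1 / 2) / 2 * (x - 1)^2 \<le> F x \<and>
      F x \<le> F 1 + F' 1 * (x - 1) + (F'' 1 + - F'' 1 / 2) / 2 * (x - 1)^2)"
    using lmax F''1 by (intro second_order_taylor_bounds_near[OF F_at F'_deriv]) auto
  moreover have "F 1 + F' 1 * (x - 1) + (F'' 1 - - F'' 1 / 2) / 2 * (x - 1)^2
      = F 1 + F' 1 * (x - 1) - (- 3 * F'' 1 / 4) * (x - 1)^2"
    and "F 1 + F' 1 * (x - 1) + (F'' 1 + - F'' 1 / 2) / 2 * (x - 1)^2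
      = F 1 + F' 1 * (x - 1) - (- F'' 1 / 4) * (x - 1)^2" for x
    by (simp_all add: field_simps)
  ultimately show ?thesis by auto
qed

section \<open>Lower bound on the mean queue length\<close>

lemma abs_sqrt_minus_1_le:
  assumes "0 \<le> l"
  shows "\<bar>sqrt l - 1\<bar> \<le> \<bar>l - 1\<bar>"
proof -
  have sqrt: "0 \<le> sqrt l" "sqrt l * sqrt l = l" using assms by simp_all
  have "l - 1 = (sqrt l - 1) * (sqrt l + 1)" using sqrt(2) by (simp add: algebra_simps)
  then have "\<bar>l - 1\<bar> = \<bar>sqrt l - 1\<bar> * \<bar>sqrt l + 1\<bar>" by (simp only: abs_mult)
  also have "\<bar>sqrt l + 1\<bar> = sqrt l + 1" using sqrt(1) by (intro abs_of_nonneg) linarith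
  finally show ?thesis using sqrt(1) by (simp add: mult_le_cancel_left1)
qed

lemma sqrt_mult_increment_le:
  fixes p l :: real
  assumes p: "0 \<le> p" and l: "0 \<le> l"
  shows "max (sqrt (p * l) - sqrt p) 0 \<le> sqrt p * max (l - 1) 0"
    and "max (sqrt p - sqrt (p * l)) 0 \<le> sqrt p * max (1 - l) 0"
proof -
  have "\<bar>sqrt l - 1\<bar> \<le> \<bar>l - 1\<bar>" by (rule abs_sqrt_minus_1_le[OF l])
  moreover have "1 \<le> sqrt l \<longleftrightarrow> 1 \<le> l" by simp
  ultimately have up: "max (sqrt l - 1) 0 \<le> max (l - 1) 0"
    and down: "max (1 - sqrt l) 0 \<le> max (1 - l) 0"
    by (simp_all add: max_def abs_if split: if_splits)
  have "max (sqrt (p * l) - sqrt p) 0 = sqrt p * max (sqrt l - 1) 0"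
    and "max (sqrt p - sqrt (p * l)) 0 = sqrt p * max (1 - sqrt l) 0"
    using p by (simp_all add: real_sqrt_mult max_mult_distrib_left right_diff_distrib)
  then show "max (sqrt (p * l) - sqrt p) 0 \<le> sqrt p * max (l - 1) 0"
    and "max (sqrt p - sqrt (p * l)) 0 \<le> sqrt p * max (1 - l) 0"
    using mult_left_mono[OF up real_sqrt_ge_zero[OF p]] mult_left_mono[OF down real_sqrt_ge_zero[OF p]]
    by simp_all
qed

lemma power2_add_sum_le:
  fixes a :: "nat \<Rightarrow> real"
  shows "(y + (\<Sum>j\<in>A. a j))^2 \<le> 2 * y^2 + 2 * real (card A) * (\<Sum>j\<in>A. (a j)^2)"
proof -
  let ?S = "\<Sum>j\<in>A. a j"
  have "?S^2 \<le> real (card A) * (\<Sum>j\<in>A. (a j)^2)"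
    using Cauchy_Schwarz_ineq_sum[of "\<lambda>_. 1" a A] by simp
  then have "2 * ?S^2 \<le> 2 * real (card A) * (\<Sum>j\<in>A. (a j)^2)" by simp
  moreover have "(y + ?S)^2 \<le> 2 * y^2 + 2 * ?S^2"
    using zero_le_power2[of "y - ?S"] by (simp add: power2_eq_square algebra_simps)
  ultimately show ?thesis by linarith
qed

lemma initial_mass_le_of_excess:
  fixes p lam :: "nat \<Rightarrow> real"
  assumes p_nonneg: "\<And>j. 0 \<le> p j" and lam_nonneg: "\<And>j. 0 \<le> lam j"
    and balance: "\<And>j. p (Suc j) = p j * lam j"
    and excess: "\<And>n. (\<Sum>j<n. p j * (max (lam j - 1) 0)^2) \<le> D"
  shows "(\<Sum>q<N. p q) \<le> 2 * real N * p 0 + 2 * real N^2 * D"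
proof -
  define a where "a j = max (sqrt (p (Suc j)) - sqrt (p j)) 0" for j
  have a_sq: "(a j)^2 \<le> p j * (max (lam j - 1) 0)^2" for j
  proof -
    have "a j \<le> sqrt (p j) * max (lam j - 1) 0"
      unfolding a_def balance by (rule sqrt_mult_increment_le(1)[OF p_nonneg lam_nonneg])
    then have "(a j)^2 \<le> (sqrt (p j) * max (lam j - 1) 0)^2"
      by (intro power_mono) (auto simp: a_def)
    then show ?thesis by (simp add: power_mult_distrib p_nonneg)
  qed
  have telescope: "sqrt (p q) \<le> sqrt (p 0) + (\<Sum>j<q. a j)" for q
    by (induction q) (auto simp: a_def)
  have D: "0 \<le> D" using excess[of 0] by simp
  have "p q \<le> 2 * p 0 + 2 * real N * D" if "q < N" for q
  proof -
    have "(sqrt (p q))^2 \<le> (sqrt (p 0) + (\<Sum>j<q. a j))^2"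
      using telescope[of q] p_nonneg[of q] by (intro power_mono) auto
    then have "p q \<le> (sqrt (p 0) + (\<Sum>j<q. a j))^2" using p_nonneg[of q] by simp
    also have "\<dots> \<le> 2 * p 0 + 2 * real q * (\<Sum>j<q. (a j)^2)"
      using power2_add_sum_le[of "sqrt (p 0)" a "{..<q}"] p_nonneg[of 0] by simp
    also have "(\<Sum>j<q. (a j)^2) \<le> (\<Sum>j<q. p j * (max (lam j - 1) 0)^2)"
      by (rule sum_mono) (rule a_sq)
    also have "\<dots> \<le> D" by (rule excess)
    finally show ?thesis
      using that D by (smt (verit) mult_left_mono mult_right_mono of_nat_0_le_iff of_nat_less_iff)
  qed
  then have "(\<Sum>q<N. p q) \<le> (\<Sum>q<N. 2 * p 0 + 2 * real N * D)" by (intro sum_mono) simp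
  then show ?thesis by (simp add: power2_eq_square algebra_simps)
qed

lemma initial_mass_le_of_deficit:
  fixes p lam :: "nat \<Rightarrow> real"
  assumes p_nonneg: "\<And>j. 0 \<le> p j" and lam_nonneg: "\<And>j. 0 \<le> lam j"
    and balance: "\<And>j. p (Suc j) = p j * lam j"
    and deficit: "\<And>n. (\<Sum>j<n. p j * (max (1 - lam j) 0)^2) \<le> D"
    and total: "\<And>n. (\<Sum>q<n. p q) \<le> 1"
  shows "3 * (\<Sum>q<L. p q) \<le> 2 + 2 * real L^2 * D"
proof -
  define b where "b j = max (sqrt (p j) - sqrt (p (Suc j))) 0" for j
  have b_sq: "(b j)^2 \<le> p j * (max (1 - lam j) 0)^2" for j
  proof -
    have "b j \<le> sqrt (p j) * max (1 - lam j) 0"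
      unfolding b_def balance by (rule sqrt_mult_increment_le(2)[OF p_nonneg lam_nonneg])
    then have "(b j)^2 \<le> (sqrt (p j) * max (1 - lam j) 0)^2"
      by (intro power_mono) (auto simp: b_def)
    then show ?thesis by (simp add: power_mult_distrib p_nonneg)
  qed
  have telescope: "sqrt (p q) \<le> sqrt (p (q + n)) + (\<Sum>j\<in>{q..<q + n}. b j)" for q n
    by (induction n) (auto simp: b_def)
  have "p q \<le> 2 * p (q + L) + 2 * real L * D" for q
  proof -
    have "(sqrt (p q))^2 \<le> (sqrt (p (q + L)) + (\<Sum>j\<in>{q..<q + L}. b j))^2"
      using telescope[of q L] p_nonneg[of q] by (intro power_mono) auto
    then have "p q \<le> (sqrt (p (q + L)) + (\<Sum>j\<in>{q..<q + L}. b j))^2"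
      using p_nonneg[of q] by simp
    also have "\<dots> \<le> 2 * p (q + L) + 2 * real L * (\<Sum>j\<in>{q..<q + L}. (b j)^2)"
      using power2_add_sum_le[of "sqrt (p (q + L))" b "{q..<q + L}"] p_nonneg[of "q + L"] by simp
    also have "(\<Sum>j\<in>{q..<q + L}. (b j)^2) \<le> (\<Sum>j\<in>{q..<q + L}. p j * (max (1 - lam j) 0)^2)"
      by (rule sum_mono) (rule b_sq)
    also have "\<dots> \<le> (\<Sum>j<q + L. p j * (max (1 - lam j) 0)^2)"
      by (rule sum_mono2) (auto intro!: mult_nonneg_nonneg p_nonneg)
    also have "\<dots> \<le> D" by (rule deficit)
    finally show ?thesis by (simp add: mult_left_mono)
  qed
  then have "(\<Sum>q<L. p q) \<le> (\<Sum>q<L. 2 * p (q + L) + 2 * real L * D)" by (intro sum_mono)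
  also have "\<dots> = 2 * (\<Sum>q\<in>{L..<L + L}. p q) + 2 * real L^2 * D"
    using sum.shift_bounds_nat_ivl[of p 0 L L]
    by (simp add: sum.distrib sum_distrib_left lessThan_atLeast0 power2_eq_square)
  finally have "(\<Sum>q<L. p q) \<le> 2 * (\<Sum>q\<in>{L..<L + L}. p q) + 2 * real L^2 * D" .
  moreover have "(\<Sum>q<L. p q) + (\<Sum>q\<in>{L..<L + L}. p q) \<le> 1"
    using sum.atLeastLessThan_concat[of 0 L "L + L" p] total[of "L + L"]
    by (simp add: lessThan_atLeast0)
  ultimately show ?thesis by linarith
qed

lemma regret_le_imp_bounds:
  assumes pol: "policy lmax lam" and st: "stable lam"
    and FS: "Fstar F lmax = F 1" and F_bdd: "bounded (F ` {0..lmax})"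
    and s: "0 < s" and c: "0 < c"
    and gap: "\<forall>x\<in>{0..lmax}. F x \<le> F 1 + s * (x - 1) - c * \<phi> x"
    and \<phi>_nonneg: "\<forall>x. 0 \<le> \<phi> x" and reg: "regret F lmax lam \<le> \<epsilon>"
  shows "0 \<le> \<epsilon>" and "stat_dist lam 0 \<le> \<epsilon> / s"
    and "(\<Sum>j<n. stat_dist lam j * \<phi> (lam j)) \<le> \<epsilon> / c"
proof -
  let ?p0 = "stat_dist lam 0" and ?S = "\<Sum>j<n. stat_dist lam j * \<phi> (lam j)"
  have "\<forall>x\<in>{0..lmax}. 0 \<le> \<phi> x" using \<phi>_nonneg by blast
  then have "s * ?p0 + c * ?S \<le> \<epsilon>"
    using regret_ge[OF pol st FS F_bdd gap _ less_imp_le[OF c]] reg by (meson order_trans)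
  moreover have "0 \<le> s * ?p0" "0 \<le> c * ?S"
    using stat_dist_nonneg[OF policy_nonneg[OF pol] st] \<phi>_nonneg s c by (simp_all add: sum_nonneg)
  ultimately have "0 \<le> \<epsilon>" "s * ?p0 \<le> \<epsilon>" "c * ?S \<le> \<epsilon>" by linarith+
  then show "0 \<le> \<epsilon>" "?p0 \<le> \<epsilon> / s" "?S \<le> \<epsilon> / c" using s c by (simp_all add: field_simps)
qed

lemma initial_mass_le_of_regret:
  assumes s: "0 < s" and c: "0 < c"
    and FS: "Fstar F lmax = F 1" and F_bdd: "bounded (F ` {0..lmax})"
    and line: "\<forall>x\<in>{0..lmax}. F x \<le> F 1 + s * (x - 1)"
    and gap: "(\<forall>x\<in>{0..1}. F x \<le> F 1 + s * (x - 1) - c * (x - 1)^2) \<or>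
              (\<forall>x\<in>{1..lmax}. F x \<le> F 1 + s * (x - 1) - c * (x - 1)^2)"
    and pol: "policy lmax lam" and st: "stable lam" and reg: "regret F lmax lam \<le> \<epsilon>"
  shows "(\<Sum>q<N. stat_dist lam q) \<le> 2 / 3 + 2 * real N * \<epsilon> / s + 2 * real N^2 * \<epsilon> / c"
proof -
  define p where "p = stat_dist lam"
  note lam_nonneg = policy_nonneg[OF pol]
  have p_nonneg: "0 \<le> p i" for i unfolding p_def by (rule stat_dist_nonneg[OF lam_nonneg st])
  have balance: "p (Suc j) = p j * lam j" for j unfolding p_def by (rule stat_dist_Suc[OF lam_nonneg st])
  from gap show ?thesis
  proof
    assume left: "\<forall>x\<in>{0..1}. F x \<le> F 1 + s * (x - 1) - c * (x - 1)^2"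
    have "\<forall>x\<in>{0..lmax}. F x \<le> F 1 + s * (x - 1) - c * (max (1 - x) 0)^2"
      using left line by (auto simp: max_def power2_commute)
    then have "0 \<le> \<epsilon>" and "\<And>n. (\<Sum>j<n. p j * (max (1 - lam j) 0)^2) \<le> \<epsilon> / c"
      using regret_le_imp_bounds[where \<phi>="\<lambda>x. (max (1 - x) 0)^2", OF pol st FS F_bdd s c _ _ reg]
      unfolding p_def by auto
    then have "3 * (\<Sum>q<N. p q) \<le> 2 + 2 * real N^2 * (\<epsilon> / c)"
      using initial_mass_le_of_deficit[of p lam, OF p_nonneg lam_nonneg balance]
        sum_stat_dist_le_1[OF lam_nonneg st] unfolding p_def by blast
    moreover have "0 \<le> 2 * real N * \<epsilon> / s" "0 \<le> 2 * real N^2 * \<epsilon> / c"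
      and "2 * real N^2 * (\<epsilon> / c) = 2 * real N^2 * \<epsilon> / c"
      using \<open>0 \<le> \<epsilon>\<close> s c by simp_all
    ultimately show ?thesis unfolding p_def by linarith
  next
    assume right: "\<forall>x\<in>{1..lmax}. F x \<le> F 1 + s * (x - 1) - c * (x - 1)^2"
    have "\<forall>x\<in>{0..lmax}. F x \<le> F 1 + s * (x - 1) - c * (max (x - 1) 0)^2"
      using right line by (auto simp: max_def)
    then have "p 0 \<le> \<epsilon> / s" and "\<And>n. (\<Sum>j<n. p j * (max (lam j - 1) 0)^2) \<le> \<epsilon> / c"
      using regret_le_imp_bounds[where \<phi>="\<lambda>x. (max (x - 1) 0)^2", OF pol st FS F_bdd s c _ _ reg]
      unfolding p_def by auto
    then have "(\<Sum>q<N. p q) \<le> 2 * real N * p 0 + 2 * real N^2 * (\<epsilon> / c)"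
      using initial_mass_le_of_excess[of p lam, OF p_nonneg lam_nonneg balance] by blast
    also have "\<dots> \<le> 2 * real N * (\<epsilon> / s) + 2 * real N^2 * (\<epsilon> / c)"
      using mult_left_mono[OF \<open>p 0 \<le> \<epsilon> / s\<close>, of "2 * real N"] by simp
    finally show ?thesis unfolding p_def by simp
  qed
qed

lemma exp_queue_ge_of_regret:
  assumes s: "0 < s" and c: "0 < c"
    and FS: "Fstar F lmax = F 1" and F_bdd: "bounded (F ` {0..lmax})"
    and line: "\<forall>x\<in>{0..lmax}. F x \<le> F 1 + s * (x - 1)"
    and gap: "(\<forall>x\<in>{0..1}. F x \<le> F 1 + s * (x - 1) - c * (x - 1)^2) \<or>
              (\<forall>x\<in>{1..lmax}. F x \<le> F 1 + s * (x - 1) - c * (x - 1)^2)"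
    and \<alpha>: "0 < \<alpha>" "2 * \<alpha> / s \<le> 1 / 12" "2 * \<alpha>^2 / c \<le> 1 / 12"
    and \<epsilon>: "0 < \<epsilon>" "\<epsilon> \<le> 1" "\<epsilon> \<le> \<alpha>^2 / 4"
    and pol: "policy lmax lam" and st: "stable lam" and reg: "regret F lmax lam \<le> \<epsilon>"
  shows "ennreal (\<alpha> / 12 / sqrt \<epsilon>) \<le> exp_queue lam"
proof -
  define N where "N = nat \<lfloor>\<alpha> / sqrt \<epsilon>\<rfloor>"
  have sqrt_\<epsilon>: "0 < sqrt \<epsilon>" "sqrt \<epsilon> \<le> 1" "sqrt \<epsilon> * sqrt \<epsilon> = \<epsilon>" using \<epsilon> by auto
  have "sqrt \<epsilon> \<le> \<alpha> / 2"
    using real_sqrt_le_mono[OF \<epsilon>(3)] \<alpha>(1) by (simp add: real_sqrt_divide)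
  then have "1 \<le> \<alpha> / (2 * sqrt \<epsilon>)" using sqrt_\<epsilon> by (simp add: field_simps)
  moreover have "0 \<le> \<alpha> / sqrt \<epsilon>" using \<alpha>(1) sqrt_\<epsilon>(1) by simp
  then have "\<alpha> / sqrt \<epsilon> - 1 \<le> real N" "real N \<le> \<alpha> / sqrt \<epsilon>"
    unfolding N_def by linarith+
  ultimately have N_ge: "\<alpha> / (2 * sqrt \<epsilon>) \<le> real N" and N_le: "real N * sqrt \<epsilon> \<le> \<alpha>"
    using sqrt_\<epsilon>(1) by (simp_all add: field_simps)
  have "real N * \<epsilon> = (real N * sqrt \<epsilon>) * sqrt \<epsilon>" using sqrt_\<epsilon>(3) by (simp add: mult.assoc)
  also have "\<dots> \<le> real N * sqrt \<epsilon>"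
    using mult_left_mono[OF sqrt_\<epsilon>(2), of "real N * sqrt \<epsilon>"] sqrt_\<epsilon>(1) by simp
  finally have "real N * \<epsilon> \<le> \<alpha>" using N_le by linarith
  then have "2 * real N * \<epsilon> / s \<le> 2 * \<alpha> / s" using s by (simp add: field_simps)
  moreover have "(real N * sqrt \<epsilon>)^2 \<le> \<alpha>^2" using N_le sqrt_\<epsilon>(1) by (intro power_mono) auto
  then have "real N^2 * \<epsilon> \<le> \<alpha>^2" using \<epsilon>(1) by (simp add: power_mult_distrib)
  then have "2 * real N^2 * \<epsilon> / c \<le> 2 * \<alpha>^2 / c" using c by (simp add: field_simps)
  ultimately have "(\<Sum>q<N. stat_dist lam q) \<le> 5 / 6"
    using initial_mass_le_of_regret[OF s c FS F_bdd line gap pol st reg, of N] \<alpha>(2,3) by linarith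
  then have "real N * (1 / 6) \<le> real N * (1 - (\<Sum>q<N. stat_dist lam q))"
    by (intro mult_left_mono) auto
  moreover have "\<alpha> / 12 / sqrt \<epsilon> \<le> real N * (1 / 6)" using N_ge by (simp add: field_simps)
  ultimately show ?thesis
    using exp_queue_ge[OF policy_nonneg[OF pol] st, of N] by (meson ennreal_leI order_trans)
qed

lemma qstar_lower_bound:
  assumes s: "0 < s" and c: "0 < c"
    and FS: "Fstar F lmax = F 1" and F_bdd: "bounded (F ` {0..lmax})"
    and line: "\<forall>x\<in>{0..lmax}. F x \<le> F 1 + s * (x - 1)"
    and gap: "(\<forall>x\<in>{0..1}. F x \<le> F 1 + s * (x - 1) - c * (x - 1)^2) \<or>
              (\<forall>x\<in>{1..lmax}. F x \<le> F 1 + s * (x - 1) - c * (x - 1)^2)"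
  shows "\<exists>C1>0. \<exists>\<epsilon>0>0. \<forall>\<epsilon>\<in>{0<..\<epsilon>0}. ennreal (C1 / sqrt \<epsilon>) \<le> qstar F lmax \<epsilon>"
proof (intro exI conjI ballI)
  define \<alpha> where "\<alpha> = min (s / 24) (min 1 (c / 24))"
  have \<alpha>: "0 < \<alpha>" "\<alpha> \<le> s / 24" "\<alpha> \<le> 1" "\<alpha> \<le> c / 24" using s c by (auto simp: \<alpha>_def)
  moreover have "\<alpha> * \<alpha> \<le> \<alpha>" by (rule mult_left_le) (use \<alpha> in auto)
  then have "\<alpha>^2 \<le> c / 24" unfolding power2_eq_square using \<alpha>(4) by linarith
  ultimately have "2 * \<alpha> / s \<le> 1 / 12" "2 * \<alpha>^2 / c \<le> 1 / 12"
    using s c by (simp_all add: field_simps)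
  note \<alpha> = \<alpha>(1) this
  show "0 < \<alpha> / 12" "0 < min 1 (\<alpha>^2 / 4)" using \<alpha> by auto
  fix \<epsilon> assume "\<epsilon> \<in> {0<..min 1 (\<alpha>^2 / 4)}"
  then have \<epsilon>: "0 < \<epsilon>" "\<epsilon> \<le> 1" "\<epsilon> \<le> \<alpha>^2 / 4" by auto
  show "ennreal (\<alpha> / 12 / sqrt \<epsilon>) \<le> qstar F lmax \<epsilon>"
    unfolding qstar_def
    by (rule INF_greatest, rule exp_queue_ge_of_regret[OF s c FS F_bdd line gap \<alpha> \<epsilon>]) auto
qed

section \<open>Upper bound: tent-shaped policies\<close>

definition ratio_policy :: "(nat \<Rightarrow> real) \<Rightarrow> nat \<Rightarrow> nat \<Rightarrow> real" where
  "ratio_policy u N q = (if q < N then (u (Suc q) / u q)^2 else 0)"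

lemma ratio_policy_nonneg: "0 \<le> ratio_policy u N q"
  by (simp add: ratio_policy_def)

lemma reach_ratio_policy: "reach (ratio_policy u N) \<subseteq> {..N}"
proof
  fix i assume "i \<in> reach (ratio_policy u N)"
  then have "N < i \<Longrightarrow> 0 < ratio_policy u N N" unfolding reach_def by blast
  then show "i \<in> {..N}" by (auto simp: ratio_policy_def not_le[symmetric])
qed

lemma stable_ratio_policy: "stable (ratio_policy u N)"
  unfolding stable_def by (rule summable_on_finite[OF finite_subset[OF reach_ratio_policy]]) simp

lemma policy_ratio_policy:
  assumes "0 \<le> lmax" and "\<And>q. q < N \<Longrightarrow> (u (Suc q) / u q)^2 \<le> lmax"
  shows "policy lmax (ratio_policy u N)"
  using assms unfolding policy_def ratio_policy_def by auto

lemma stat_dist_ratio_policy: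
  assumes u_pos: "\<And>q. 0 < u q" and q: "q \<le> N"
  shows "stat_dist (ratio_policy u N) q = (u q)^2 / (\<Sum>i\<le>N. (u i)^2)"
proof -
  define p where "p = stat_dist (ratio_policy u N)"
  note lam_facts = ratio_policy_nonneg[of u N] stable_ratio_policy[of u N]
  have prod: "(\<Prod>j<i. ratio_policy u N j) = (u i / u 0)^2" if "i \<le> N" for i
    using that
  proof (induction i)
    case (Suc i)
    then show ?case using u_pos[of i]
      by (simp add: ratio_policy_def power_divide field_simps)
  qed (use u_pos[of 0] in simp)
  define a where "a = p 0 / (u 0)^2"
  have p_eq: "p i = a * (u i)^2" if "i \<le> N" for i
    using stationary_eq_prod[OF stationary_stat_dist[OF lam_facts], of i] prod[OF that] u_pos[of 0]
    by (simp add: p_def a_def power_divide)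
  have "1 = suminf p" using sums_unique[OF stat_dist_sums[OF lam_facts]] by (simp add: p_def)
  also have "\<dots> = (\<Sum>i\<le>N. p i)"
    using stat_dist_eq_0[OF lam_facts] reach_ratio_policy by (intro suminf_finite) (auto simp: p_def)
  also have "\<dots> = a * (\<Sum>i\<le>N. (u i)^2)" by (simp add: p_eq sum_distrib_left)
  moreover have "0 < (\<Sum>i\<le>N. (u i)^2)" using u_pos by (intro sum_pos) (auto simp: less_le)
  ultimately have "a = 1 / (\<Sum>i\<le>N. (u i)^2)" by (simp add: field_simps)
  then show ?thesis using p_eq[OF q] by (simp add: p_def)
qed

lemma regret_ratio_policy_le:
  assumes u_pos: "\<And>q. 0 < u q" and pol: "policy lmax (ratio_policy u N)"
    and FS: "Fstar F lmax = F 1" and F_bdd: "bounded (F ` {0..lmax})"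
    and lower: "\<forall>x\<in>{0..lmax}. F 1 + s * (x - 1) - K * (x - 1)^2 \<le> F x"
  shows "regret F lmax (ratio_policy u N) \<le>
    (s * (u 0)^2 + K * (\<Sum>q\<le>N. (u q)^2 * (ratio_policy u N q - 1)^2)) / (\<Sum>q\<le>N. (u q)^2)"
proof -
  let ?lam = "ratio_policy u N" and ?Z = "\<Sum>q\<le>N. (u q)^2"
  note lam_facts = ratio_policy_nonneg[of u N] stable_ratio_policy[of u N]
  have outside: "stat_dist ?lam i * (?lam i - 1)^2 = 0" if "i \<notin> {..N}" for i
    using stat_dist_eq_0[OF lam_facts] reach_ratio_policy that by auto
  have "summable (\<lambda>i. stat_dist ?lam i * (?lam i - 1)^2)"
    by (rule summable_finite[of "{..N}"]) (use outside in auto)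
  then have "regret F lmax ?lam \<le> s * stat_dist ?lam 0 + K * (\<Sum>i. stat_dist ?lam i * (?lam i - 1)^2)"
    by (rule regret_le[OF pol stable_ratio_policy FS F_bdd lower])
  also have "(\<Sum>i. stat_dist ?lam i * (?lam i - 1)^2) = (\<Sum>i\<le>N. stat_dist ?lam i * (?lam i - 1)^2)"
    by (rule suminf_finite) (use outside in auto)
  also have "\<dots> = (\<Sum>q\<le>N. (u q)^2 * (?lam q - 1)^2) / ?Z"
    by (simp add: stat_dist_ratio_policy[OF u_pos] sum_divide_distrib)
  finally show ?thesis
    by (simp add: stat_dist_ratio_policy[OF u_pos] add_divide_distrib)
qed

lemma ratio_policy_deviation_le:
  assumes u: "1 \<le> u q" and step: "\<bar>u (Suc q) - u q\<bar> \<le> 1" and q: "q < N"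
  shows "(u q)^2 * (ratio_policy u N q - 1)^2 \<le> 9"
proof -
  let ?u = "u q" and ?v = "u (Suc q)"
  have "\<bar>?v^2 - ?u^2\<bar> = \<bar>?v - ?u\<bar> * \<bar>?v + ?u\<bar>"
    by (simp add: power2_eq_square algebra_simps abs_mult[symmetric])
  also have "\<dots> \<le> 1 * (3 * ?u)" using step u by (intro mult_mono) auto
  finally have "\<bar>?v^2 - ?u^2\<bar> \<le> \<bar>3 * ?u\<bar>" using u by simp
  then have "(?v^2 - ?u^2)^2 \<le> (3 * ?u)^2" by (simp only: abs_le_square_iff)
  moreover have "(u q)^2 * (ratio_policy u N q - 1)^2 = (?v^2 - ?u^2)^2 / ?u^2"
    using u q by (simp add: ratio_policy_def power_divide field_simps)
  ultimately show ?thesis using u by (simp add: power_mult_distrib divide_le_eq)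
qed

definition tent :: "nat \<Rightarrow> nat \<Rightarrow> nat \<Rightarrow> real" where
  "tent m K q = real m + real (min q (2 * K - q))"

lemma tent_ge: "real m \<le> tent m K q"
  by (simp add: tent_def)

lemma tent_step: "q < 2 * K \<Longrightarrow> \<bar>tent m K (Suc q) - tent m K q\<bar> \<le> 1"
  unfolding tent_def by (cases "q < K") (auto simp: min_def)

lemma tent_ratio_le:
  assumes m: "1 \<le> m" and q: "q < 2 * K"
  shows "(tent m K (Suc q) / tent m K q)^2 \<le> (1 + 1 / real m)^2"
proof -
  have pos: "real m \<le> tent m K q" "0 < tent m K q" using tent_ge[of m K q] m by auto
  have "tent m K (Suc q) / tent m K q \<le> (tent m K q + 1) / tent m K q"
    using tent_step[OF q, of m] pos by (intro divide_right_mono) auto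
  also have "\<dots> = 1 + 1 / tent m K q" using pos by (simp add: field_simps)
  also have "\<dots> \<le> 1 + 1 / real m" using pos m by (simp add: frac_le)
  finally show ?thesis
    using tent_ge[of m K "Suc q"] pos by (intro power_mono) auto
qed

lemma sum_power2_atMost_ge: "real n ^ 3 / 3 \<le> (\<Sum>q\<le>n. (real q)^2)"
proof (induction n)
  case (Suc n)
  have "real (Suc n) ^ 3 / 3 \<le> real n ^ 3 / 3 + (real (Suc n))^2"
    by (simp add: power2_eq_square power3_eq_cube field_simps)
  then show ?case using Suc by simp
qed simp

lemma sum_tent_power2_ge: "real K ^ 3 / 3 \<le> (\<Sum>q\<le>2 * K. (tent m K q)^2)"
proof -
  have "real K ^ 3 / 3 \<le> (\<Sum>q\<le>K. (real q)^2)" by (rule sum_power2_atMost_ge)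
  also have "\<dots> \<le> (\<Sum>q\<le>K. (tent m K q)^2)"
    by (intro sum_mono power_mono) (auto simp: tent_def)
  also have "\<dots> \<le> (\<Sum>q\<le>2 * K. (tent m K q)^2)" by (intro sum_mono2) auto
  finally show ?thesis .
qed

lemma policy_tent:
  assumes "1 \<le> m" and "(1 + 1 / real m)^2 \<le> lmax"
  shows "policy lmax (ratio_policy (tent m K) (2 * K))"
  using assms tent_ratio_le order_trans[OF zero_le_power2 assms(2)]
  by (intro policy_ratio_policy) (blast intro: order_trans)+

text \<open>The tent profile spreads the stationary mass \<open>\<propto> tent\<^sup>2\<close> over \<open>{..2 K}\<close> with total weight
  of order \<open>K\<^sup>3\<close>, while its drift costs only \<open>s m\<^sup>2\<close> at the boundary \<open>0\<close> and \<open>O(1)\<close> per state.\<close>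
lemma regret_tent_le:
  assumes m: "1 \<le> m" and lmax: "(1 + 1 / real m)^2 \<le> lmax" and K: "1 \<le> K"
    and s: "0 \<le> s" and \<kappa>: "0 \<le> \<kappa>"
    and FS: "Fstar F lmax = F 1" and F_bdd: "bounded (F ` {0..lmax})"
    and lower: "\<forall>x\<in>{0..lmax}. F 1 + s * (x - 1) - \<kappa> * (x - 1)^2 \<le> F x"
  shows "regret F lmax (ratio_policy (tent m K) (2 * K))
           \<le> 3 * (s * real m^2 + \<kappa> * (18 + real m^2)) / real K^2"
proof -
  let ?u = "tent m K" and ?Z = "\<Sum>q\<le>2 * K. (tent m K q)^2"
  let ?S = "\<Sum>q\<le>2 * K. (?u q)^2 * (ratio_policy ?u (2 * K) q - 1)^2"
  have "1 \<le> real m" using m by simp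
  then have u_ge_1: "1 \<le> ?u q" for q using tent_ge[of m K q] by linarith
  then have u_pos: "0 < ?u q" for q by (meson less_le_trans zero_less_one)
  have Z: "real K ^ 3 / 3 \<le> ?Z" by (rule sum_tent_power2_ge)
  have "(\<Sum>q<2 * K. (?u q)^2 * (ratio_policy ?u (2 * K) q - 1)^2) \<le> (\<Sum>q<2 * K. 9)"
    using u_ge_1 tent_step by (intro sum_mono ratio_policy_deviation_le) auto
  then have "?S \<le> 18 * real K + real m^2"
    by (simp add: lessThan_Suc_atMost[symmetric] ratio_policy_def tent_def)
  have K_real: "1 \<le> real K" using K by simp
  have "\<kappa> * ?S \<le> \<kappa> * (real K * (18 + real m^2))"
    using \<open>?S \<le> _\<close> mult_right_mono[OF K_real, of "real m^2"]
    by (intro mult_left_mono[OF _ \<kappa>]) (simp add: algebra_simps)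
  moreover have "s * (?u 0)^2 \<le> real K * (s * real m^2)"
    using mult_right_mono[OF K_real, of "s * real m^2"] s by (simp add: tent_def)
  ultimately have "s * (?u 0)^2 + \<kappa> * ?S \<le> real K * (s * real m^2 + \<kappa> * (18 + real m^2))"
    by (simp add: algebra_simps)
  then have "(s * (?u 0)^2 + \<kappa> * ?S) / ?Z
      \<le> real K * (s * real m^2 + \<kappa> * (18 + real m^2)) / (real K ^ 3 / 3)"
    using Z K s \<kappa> by (intro frac_le) auto
  also have "\<dots> = 3 * (s * real m^2 + \<kappa> * (18 + real m^2)) / real K^2"
    using K by (simp add: field_simps power2_eq_square power3_eq_cube)
  finally show ?thesis
    using regret_ratio_policy_le[OF u_pos policy_tent[OF m lmax] FS F_bdd lower] by linarith
qed

lemma qstar_le_exp_queue: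
  "policy lmax lam \<Longrightarrow> stable lam \<Longrightarrow> regret F lmax lam \<le> \<epsilon> \<Longrightarrow> qstar F lmax \<epsilon> \<le> exp_queue lam"
  unfolding qstar_def by (rule INF_lower) simp

lemma ex_one_plus_inverse_power2_le:
  assumes "1 < lmax"
  shows "\<exists>m::nat. 1 \<le> m \<and> (1 + 1 / real m)^2 \<le> lmax"
proof -
  obtain m :: nat where m: "0 < m" "inverse (real m) < sqrt lmax - 1"
    using ex_inverse_of_nat_less[of "sqrt lmax - 1"] assms by auto
  then have "(1 + 1 / real m)^2 \<le> (sqrt lmax)^2"
    by (intro power_mono) (auto simp: inverse_eq_divide)
  then show ?thesis using m assms by (intro exI[of _ m]) auto
qed

lemma qstar_upper_bound:
  assumes lmax: "1 < lmax" and s: "0 < s" and \<kappa>: "0 \<le> \<kappa>"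
    and FS: "Fstar F lmax = F 1" and F_bdd: "bounded (F ` {0..lmax})"
    and lower: "\<forall>x\<in>{0..lmax}. F 1 + s * (x - 1) - \<kappa> * (x - 1)^2 \<le> F x"
  shows "\<exists>C2>0. \<forall>\<epsilon>\<in>{0<..1}. qstar F lmax \<epsilon> \<le> ennreal (C2 / sqrt \<epsilon>)"
proof -
  obtain m :: nat where m: "1 \<le> m" and m_ratio: "(1 + 1 / real m)^2 \<le> lmax"
    using ex_one_plus_inverse_power2_le[OF lmax] by blast
  define C where "C = 3 * (s * real m^2 + \<kappa> * (18 + real m^2))"
  have C: "0 < C" using s \<kappa> m by (simp add: C_def add_pos_nonneg)
  have "qstar F lmax \<epsilon> \<le> ennreal ((2 * sqrt C + 2) / sqrt \<epsilon>)" if \<epsilon>: "0 < \<epsilon>" "\<epsilon> \<le> 1" for \<epsilon>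
  proof -
    define K where "K = nat \<lceil>sqrt (C / \<epsilon>)\<rceil>"
    have "0 < sqrt (C / \<epsilon>)" using C \<epsilon> by simp
    then have K: "sqrt (C / \<epsilon>) \<le> real K" "real K \<le> sqrt (C / \<epsilon>) + 1"
      unfolding K_def by linarith+
    then have "0 < real K" using \<open>0 < sqrt (C / \<epsilon>)\<close> by linarith
    then have "1 \<le> K" by simp
    note K = K this
    then have "(sqrt (C / \<epsilon>))^2 \<le> real K ^ 2" using C \<epsilon> by (intro power_mono) auto
    then have "C / \<epsilon> \<le> real K ^ 2" using C \<epsilon> by simp
    then have "C / real K ^ 2 \<le> \<epsilon>" using \<epsilon> K(3) by (simp add: field_simps)
    moreover have "regret F lmax (ratio_policy (tent m K) (2 * K)) \<le> C / real K ^ 2"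
      unfolding C_def using m by (intro regret_tent_le[OF _ m_ratio K(3) less_imp_le[OF s] \<kappa> FS F_bdd lower]) simp
    ultimately have "regret F lmax (ratio_policy (tent m K) (2 * K)) \<le> \<epsilon>" by linarith
    then have "qstar F lmax \<epsilon> \<le> exp_queue (ratio_policy (tent m K) (2 * K))"
      using qstar_le_exp_queue policy_tent[OF _ m_ratio] stable_ratio_policy m by fastforce
    also have "\<dots> \<le> ennreal (real (2 * K))"
      by (rule exp_queue_le_if_reach_subset[OF ratio_policy_nonneg stable_ratio_policy reach_ratio_policy])
    also have "\<dots> \<le> ennreal ((2 * sqrt C + 2) / sqrt \<epsilon>)"
    proof (rule ennreal_leI)
      have "real (2 * K) \<le> 2 * (sqrt C / sqrt \<epsilon>) + 2" using K(2) by (simp add: real_sqrt_divide)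
      also have "\<dots> \<le> 2 * (sqrt C / sqrt \<epsilon>) + 2 / sqrt \<epsilon>" using \<epsilon> by (simp add: field_simps)
      finally show "real (2 * K) \<le> (2 * sqrt C + 2) / sqrt \<epsilon>" by (simp add: add_divide_distrib)
    qed
    finally show ?thesis .
  qed
  moreover have "0 < 2 * sqrt C + 2" using real_sqrt_ge_zero[of C] C by linarith
  ultimately show ?thesis by auto
qed

theorem theorem5p3:
  fixes F F' F'' F3 F4 :: "real \<Rightarrow> real" and lmax :: real
  assumes lmax: "lmax > 1"
    and F_nonneg: "\<forall>x\<in>{0..lmax}. F x \<ge> 0"
    and F0: "F 0 = 0"
    and F_deriv: "\<forall>x\<in>{0..lmax}. (F has_real_derivative F' x) (at x within {0..lmax})"
    and F'_cont: "continuous_on {0..lmax} F'"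
    and i1: "\<forall>x\<in>{0..<1}. F x < Fstar F lmax"
    and i2: "F' 1 > 0"
    and F'_deriv: "\<forall>x\<in>{0<..<lmax}. (F' has_real_derivative F'' x) (at x)"
    and F''_cont: "continuous_on {0<..<lmax} F''"
    and F''1: "F'' 1 < 0"
    and F''_deriv: "\<forall>x\<in>{0<..<lmax}. (F'' has_real_derivative F3 x) (at x)"
    and F3_deriv: "\<forall>x\<in>{0<..<lmax}. (F3 has_real_derivative F4 x) (at x)"
    and F3_bdd: "\<exists>B. \<forall>x\<in>{0<..<lmax}. \<bar>F3 x\<bar> \<le> B"
    and F4_bdd: "\<exists>B. \<forall>x\<in>{0<..<lmax}. \<bar>F4 x\<bar> \<le> B"
    and cl: "concave_like F lmax"
  shows "\<exists>C1 C2 eps0. C1 > 0 \<and> C2 > 0 \<and> eps0 > 0 \<and>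
           (\<forall>eps\<in>{0<..eps0}. ennreal (C1 / sqrt eps) \<le> qstar F lmax eps \<and>
                              qstar F lmax eps \<le> ennreal (C2 / sqrt eps))"
proof -
  have F_cont: "continuous_on {0..lmax} F" using F_deriv by (intro DERIV_continuous_on) blast
  have F_bdd: "bounded (F ` {0..lmax})"
    by (intro compact_imp_bounded compact_continuous_image F_cont compact_Icc)
  obtain r where r: "0 < r" "r < 1" "1 + r < lmax" and near: "\<forall>x. \<bar>x - 1\<bar> \<le> r \<longrightarrow>
      F 1 + F' 1 * (x - 1) - (- 3 * F'' 1 / 4) * (x - 1)^2 \<le> F x \<and>
      F x \<le> F 1 + F' 1 * (x - 1) - (- F'' 1 / 4) * (x - 1)^2"
    using quadratic_bounds_near_1[OF lmax F_deriv F'_deriv F''_cont F''1] by blast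
  have curv: "0 \<le> - 3 * F'' 1 / 4" "0 < - F'' 1 / 4" using F''1 by simp_all
  have line: "\<forall>x\<in>{0..lmax}. F x \<le> F 1 + F' 1 * (x - 1)"
    using concave_like_supporting_line[OF cl r curv(1) less_imp_le[OF curv(2)]] near by blast
  have FS: "Fstar F lmax = F 1"
    using Fstar_eq_if_supporting_line[OF _ F_cont _ F_nonneg line] lmax i2 by simp
  obtain c where "0 < c" and gap: "(\<forall>x\<in>{0..1}. F x \<le> F 1 + F' 1 * (x - 1) - c * (x - 1)^2) \<or>
      (\<forall>x\<in>{1..lmax}. F x \<le> F 1 + F' 1 * (x - 1) - c * (x - 1)^2)"
    using concave_like_quadratic_gap[OF cl r curv(2) F_cont _ line] near by blast
  obtain \<kappa> where "0 \<le> \<kappa>" and lower: "\<forall>x\<in>{0..lmax}. F 1 + F' 1 * (x - 1) - \<kappa> * (x - 1)^2 \<le> F x"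
    using quadratic_lower_bound_from_local[OF r(1) curv(1) less_imp_le[OF i2] F_nonneg] near by blast
  obtain C1 eps0 where "0 < C1" "0 < eps0"
    and lower_bound: "\<forall>eps\<in>{0<..eps0}. ennreal (C1 / sqrt eps) \<le> qstar F lmax eps"
    using qstar_lower_bound[OF i2 \<open>0 < c\<close> FS F_bdd line gap] by blast
  obtain C2 where "0 < C2" and upper_bound: "\<forall>eps\<in>{0<..1}. qstar F lmax eps \<le> ennreal (C2 / sqrt eps)"
    using qstar_upper_bound[OF lmax i2 \<open>0 \<le> \<kappa>\<close> FS F_bdd lower] by blast
  show ?thesis
    using \<open>0 < C1\<close> \<open>0 < C2\<close> \<open>0 < eps0\<close> lower_bound upper_bound
    by (intro exI[of _ C1] exI[of _ C2] exI[of _ "min eps0 1"]) auto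
qed

end
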